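(* Let $P$ be a labelled program and $I$ a classical model of $P$. Then $G$ is an explanation for $I$ under $P$ if and only if $G$ is an explanation for $I$ under $P^I$.
   Context: Fix a finite non-empty set $\mathit{At}$ of propositional atoms. A labelled rule $r$ has the form $\ell : p_1 \vee \dots \vee p_m \leftarrow q_1 \wedge \dots \wedge q_n \wedge \neg s_1 \wedge \dots \wedge \neg s_j \wedge \neg\neg t_1 \wedge \dots \wedge \neg\neg t_k$ with $m,n,j,k \ge 0$ and atoms in $\mathit{At}$; $\mathit{Lb}(r)=\ell$, $\mathit{Hd}(r)=p_1\vee\dots\vee p_m$, $H(r)=\{p_1,\dots,p_m\}$, $\mathit{Bd}(r)$ is the whole antecedent, $\mathit{Bd}^+(r)=q_1\wedge\dots\wedge q_n$, $B^+(r)=\{q_1,\dots,q_n\}$, $\mathit{Bd}^-(r)=\neg s_1 \wedge \dots \wedge \neg s_j \wedge \neg\neg t_1 \wedge \dots \wedge \neg\neg t_k$. Empty disjunction is $\bot$, empty conjunction $\top$. A labelled program $P$ is a finite set of labelled rules with no repeated label; $\mathit{Lb}(P)$ is its set of labels. An interpretation $I\subseteq\mathit{At}$ is a (classical) model of $P$ if $I\models \mathit{Bd}(r)\to\mathit{Hd}(r)$ for every $r\in P$. The reduct is $P^I=\{\ \mathit{Lb}(r): \mathit{Hd}(r) \leftarrow \mathit{Bd}^+(r) \mid r \in P,\ I \models \mathit{Bd}^-(r)\ \}$, itself a labelled program. $\mathit{Sup}(I,P,p)=\{ r \in P \mid p \in H(r),\ I \models \mathit{Bd}(r)\}$. A support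 graph of a model $I$ under $P$ is a directed graph $G=\langle I,E,\lambda\rangle$ with vertex set $I$, edges $E\subseteq I\times I$ and a labelling $\lambda: I\to \mathit{Lb}(P)$ such that (i) $\lambda$ is injective, and (ii) for every $p\in I$, the rule $r\in P$ with $\mathit{Lb}(r)=\lambda(p)$ satisfies $r\in \mathit{Sup}(I,P,p)$ and $B^+(r)=\{q \mid (q,p)\in E\}$. An explanation is an acyclic support graph. *)

theory Defs
  imports Main
begin

text \<open>Atoms range over a finite type 'a (the finite non-empty set At = UNIV);
labels over an arbitrary type 'l.  A labelled rule
  l : p1 | ... | pm <- q1 & ... & qn & ~s1 & ... & ~sj & ~~t1 & ... & ~~tk
is represented by its label, the head atoms, the positive body atoms,
the negated atoms and the doubly negated atoms.\<close>

record ('a, 'l) rule =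
  lbl :: 'l
  hd_atoms :: "'a set"
  pos :: "'a set"
  neg :: "'a set"
  negneg :: "'a set"

definition well_formed_rule :: "('a::finite, 'l) rule \<Rightarrow> bool" where
  "well_formed_rule r \<longleftrightarrow> finite (hd_atoms r) \<and> finite (pos r) \<and> finite (neg r) \<and> finite (negneg r)"

definition labelled_program :: "('a::finite, 'l) rule set \<Rightarrow> bool" where
  "labelled_program P \<longleftrightarrow> finite P \<and> (\<forall>r\<in>P. well_formed_rule r) \<and> inj_on lbl P"

definition labels :: "('a, 'l) rule set \<Rightarrow> 'l set" where
  "labels P = lbl ` P"

definition sat_head :: "'a set \<Rightarrow> ('a, 'l) rule \<Rightarrow> bool" where
  "sat_head I r \<longleftrightarrow> (\<exists>p\<in>hd_atoms r. p \<in> I)"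

definition sat_bdpos :: "'a set \<Rightarrow> ('a, 'l) rule \<Rightarrow> bool" where
  "sat_bdpos I r \<longleftrightarrow> pos r \<subseteq> I"

definition sat_bdneg :: "'a set \<Rightarrow> ('a, 'l) rule \<Rightarrow> bool" where
  "sat_bdneg I r \<longleftrightarrow> (\<forall>s\<in>neg r. s \<notin> I) \<and> (\<forall>t\<in>negneg r. t \<in> I)"

definition sat_body :: "'a set \<Rightarrow> ('a, 'l) rule \<Rightarrow> bool" where
  "sat_body I r \<longleftrightarrow> sat_bdpos I r \<and> sat_bdneg I r"

definition is_model :: "'a set \<Rightarrow> ('a, 'l) rule set \<Rightarrow> bool" where
  "is_model I P \<longleftrightarrow> (\<forall>r\<in>P. sat_body I r \<longrightarrow> sat_head I r)"

definition reduct :: "'a set \<Rightarrow> ('a, 'l) rule set \<Rightarrow> ('a, 'l) rule set" where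
  "reduct I P = {\<lparr>lbl = lbl r, hd_atoms = hd_atoms r, pos = pos r, neg = {}, negneg = {}\<rparr> | r. r \<in> P \<and> sat_bdneg I r}"

definition Sup_rules :: "'a set \<Rightarrow> ('a, 'l) rule set \<Rightarrow> 'a \<Rightarrow> ('a, 'l) rule set" where
  "Sup_rules I P p = {r \<in> P. p \<in> hd_atoms r \<and> sat_body I r}"

definition support_graph :: "'a set \<Rightarrow> ('a, 'l) rule set \<Rightarrow> 'a set \<times> ('a \<times> 'a) set \<times> ('a \<Rightarrow> 'l) \<Rightarrow> bool" where
  "support_graph I P G \<longleftrightarrow> (case G of (V, E, lab) \<Rightarrow>
     V = I \<and> E \<subseteq> I \<times> I \<and> (\<forall>p\<in>I. lab p \<in> labels P) \<and> inj_on lab I \<and>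
     (\<forall>p\<in>I. \<forall>r\<in>P. lbl r = lab p \<longrightarrow>
        r \<in> Sup_rules I P p \<and> pos r = {q. (q, p) \<in> E}))"

definition explanation :: "'a set \<Rightarrow> ('a, 'l) rule set \<Rightarrow> 'a set \<times> ('a \<times> 'a) set \<times> ('a \<Rightarrow> 'l) \<Rightarrow> bool" where
  "explanation I P G \<longleftrightarrow> support_graph I P G \<and> acyclic (fst (snd G))"

end

theory Submission
  imports Defs
begin

(* Removing the negative body of a rule changes neither its label, its head nor its positive
   body, and a rule of P^I has a true body in I exactly when the rule of P it comes from does.
   So Sup(I, P^I, p) is the image of Sup(I, P, p) under this reduction, and since a support graph
   inspects its supporting rules only through their labels and positive bodies, P and P^I have
   the same support graphs, hence the same explanations. *)

definition reduct_rule :: "('a, 'l) rule \<Rightarrow> ('a, 'l) rule" where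
  "reduct_rule r = \<lparr>lbl = lbl r, hd_atoms = hd_atoms r, pos = pos r, neg = {}, negneg = {}\<rparr>"

lemma reduct_rule_simps [simp]:
  "lbl (reduct_rule r) = lbl r"
  "hd_atoms (reduct_rule r) = hd_atoms r"
  "pos (reduct_rule r) = pos r"
  "sat_bdpos I (reduct_rule r) \<longleftrightarrow> sat_bdpos I r"
  "sat_bdneg I (reduct_rule r)"
  by (simp_all add: reduct_rule_def sat_bdpos_def sat_bdneg_def)

lemma reduct_eq_image: "reduct I P = reduct_rule ` {r \<in> P. sat_bdneg I r}"
  unfolding reduct_def reduct_rule_def by blast

lemma Sup_rules_reduct: "Sup_rules I (reduct I P) p = reduct_rule ` Sup_rules I P p"
  unfolding Sup_rules_def reduct_eq_image by (auto simp: sat_body_def)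

lemma inj_on_lbl_reduct: "inj_on lbl P \<Longrightarrow> inj_on lbl (reduct I P)"
  unfolding reduct_eq_image by (rule inj_on_imageI) (auto simp: comp_def intro: inj_on_subset)

lemma inj_on_bex_eq_iff:
  assumes "inj_on f A"
  shows "(\<exists>x\<in>A. f x = y \<and> Q x) \<longleftrightarrow> y \<in> f ` A \<and> (\<forall>x\<in>A. f x = y \<longrightarrow> Q x)"
  using assms by (auto simp: inj_on_eq_iff)

lemma support_graph_iff:
  assumes "inj_on lbl P"
  shows "support_graph I P (V, E, lab) \<longleftrightarrow>
    V = I \<and> E \<subseteq> I \<times> I \<and> inj_on lab I \<and>
    (\<forall>p\<in>I. \<exists>r\<in>Sup_rules I P p. lbl r = lab p \<and> pos r = {q. (q, p) \<in> E})"
proof -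
  have vertex: "(lab p \<in> labels P \<and> (\<forall>r\<in>P. lbl r = lab p \<longrightarrow> r \<in> Sup_rules I P p \<and> pos r = E'))
    \<longleftrightarrow> (\<exists>r\<in>Sup_rules I P p. lbl r = lab p \<and> pos r = E')" for p E'
    unfolding labels_def Sup_rules_def inj_on_bex_eq_iff[OF assms, symmetric] by auto
  have "support_graph I P (V, E, lab) \<longleftrightarrow>
    V = I \<and> E \<subseteq> I \<times> I \<and> inj_on lab I \<and>
    (\<forall>p\<in>I. lab p \<in> labels P \<and> (\<forall>r\<in>P. lbl r = lab p \<longrightarrow> r \<in> Sup_rules I P p \<and> pos r = {q. (q, p) \<in> E}))"
    unfolding support_graph_def by auto
  also have "\<dots> \<longleftrightarrow> V = I \<and> E \<subseteq> I \<times> I \<and> inj_on lab I \<and>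
    (\<forall>p\<in>I. \<exists>r\<in>Sup_rules I P p. lbl r = lab p \<and> pos r = {q. (q, p) \<in> E})"
    by (simp only: vertex)
  finally show ?thesis .
qed

lemma support_graph_reduct_iff:
  assumes "inj_on lbl P"
  shows "support_graph I (reduct I P) G \<longleftrightarrow> support_graph I P G"
proof -
  obtain V E lab where "G = (V, E, lab)" by (cases G) auto
  then show ?thesis
    using assms inj_on_lbl_reduct[OF assms]
    by (simp add: support_graph_iff Sup_rules_reduct)
qed

theorem proposition3:
  fixes P :: "('a::finite, 'l) rule set" and I :: "'a set"
    and G :: "'a set \<times> ('a \<times> 'a) set \<times> ('a \<Rightarrow> 'l)"
  assumes "labelled_program P" and "is_model I P"
  shows "explanation I P G \<longleftrightarrow> explanation I (reduct I P) G"
proof -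
  have "inj_on lbl P"
    using assms(1) unfolding labelled_program_def by blast
  then show ?thesis
    unfolding explanation_def by (simp add: support_graph_reduct_iff)
qed

end
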